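(* Let $1\le i\le n-2$, $\pi_1\in\mathfrak S_i(1243,2143,321)$ and $\pi_2\in\mathfrak S_{n-i}(1243,2143,321)$. Then $\pi_1*\pi_2\in\mathfrak S_n(1243,2143,321)$ if and only if all of the following hold: (i) at least one of $\pi_1,\pi_2$ has first entry $1$; (ii) the entries $2,3,\dots,i$ appear in increasing order in $\pi_1$; (iii) the entries $\pi_2(2),\pi_2(3),\dots,\pi_2(n-i)$ are increasing.
   Context: $\mathfrak S_m(R)$ is the set of permutations of $\{1,\dots,m\}$ avoiding every pattern in $R$ (no subsequence with the same relative order as a pattern). For nonempty permutations $\pi_1,\pi_2$: let $\tilde\pi_1$ be obtained by adding $|\pi_2|-1$ to every entry of $\pi_1$ and then replacing the entry equal to $|\pi_2|$ by the first entry of $\pi_2$; let $\tilde\pi_2$ be $\pi_2$ with its first entry deleted; then $\pi_1*\pi_2=\tilde\pi_1,\ N,\ \tilde\pi_2$ (concatenation) where $N=|\pi_1|+|\pi_2|$. E.g. $3124*15342=716895342$. *)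

theory Defs
  imports Main "HOL-Library.Sublist"
begin

text \<open>Permutations of {1,...,m} are represented as lists in one-line notation.\<close>

definition is_perm :: "nat \<Rightarrow> nat list \<Rightarrow> bool" where
  "is_perm m p \<longleftrightarrow> length p = m \<and> distinct p \<and> set p = {1..m}"

definition order_iso :: "nat list \<Rightarrow> nat list \<Rightarrow> bool" where
  "order_iso s q \<longleftrightarrow> length s = length q \<and>
     (\<forall>a < length s. \<forall>b < length s. (s ! a < s ! b \<longleftrightarrow> q ! a < q ! b))"

definition contains :: "nat list \<Rightarrow> nat list \<Rightarrow> bool" where
  "contains p q \<longleftrightarrow> (\<exists>s. subseq s p \<and> order_iso s q)"

definition Av :: "nat \<Rightarrow> nat list set \<Rightarrow> nat list set" where
  "Av m R = {p. is_perm m p \<and> (\<forall>q\<in>R. \<not> contains p q)}"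

definition star :: "nat list \<Rightarrow> nat list \<Rightarrow> nat list" where
  "star p1 p2 =
     (let m = length p2; N = length p1 + length p2;
          t1 = map (\<lambda>x. if x + m - 1 = m then hd p2 else x + m - 1) p1
      in t1 @ [N] @ tl p2)"

lemma "star [3,1,2,4] [1,5,3,4,2] = [7,1,6,8,9,5,3,4,2]"
  by (simp add: star_def)

end

theory Submission
  imports Defs
begin

(* Write pi1 = alpha 1 beta and pi2 = b gamma.  Then pi1 * pi2 = alpha' b beta' N gamma, where
   alpha', beta' are alpha, beta shifted up by |pi2| - 1, so every entry of alpha' beta' N exceeds
   every entry of b gamma.  In a word of this shape a 321 can only be a descent of alpha' beta' N
   followed by an entry of gamma, an entry of alpha' beta' N followed by a descent of gamma, or an
   entry of alpha' followed by b and an entry of gamma below b.  Hence avoiding 321 amounts to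
   conditions (i)-(iii).  Under them every descent of the word either ends in gamma or is a pair
   (x, b) with x in alpha'.  The two entries preceding the final descent of a 1243 or 2143 would
   then both lie in alpha' b beta' N below its lower end, and at most b does. *)

lemma subseq_pair_Cons_iff:
  "subseq [x, y] (z # zs) \<longleftrightarrow> (x = z \<and> y \<in> set zs) \<or> subseq [x, y] zs"
  by (cases "x = z") (auto simp: subseq_singleton_left dest: subseq_Cons')

lemma subseq_pair_append_iff:
  "subseq [x, y] (xs @ ys) \<longleftrightarrow>
     subseq [x, y] xs \<or> (x \<in> set xs \<and> y \<in> set ys) \<or> subseq [x, y] ys"
  by (induction xs) (simp_all only: append_Cons append_Nil subseq_pair_Cons_iff, auto)

lemma sorted_iff_subseq_pairs:
  "sorted xs \<longleftrightarrow> (\<forall>x y. subseq [x, y] xs \<longrightarrow> x \<le> y)"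
proof (induction xs)
  case (Cons z zs)
  then show ?case by (simp only: sorted_simps subseq_pair_Cons_iff) blast
qed simp

lemma sorted_subseq_pair_le: "sorted xs \<Longrightarrow> subseq [x, y] xs \<Longrightarrow> x \<le> y"
  unfolding sorted_iff_subseq_pairs by blast

lemma set_mono_subseq: "subseq xs ys \<Longrightarrow> set xs \<subseteq> set ys"
  by (induction rule: list_emb.induct) auto

lemma subseq_Cons_appendI:
  assumes "x \<in> set xs" and "subseq ys zs"
  shows "subseq (x # ys) (xs @ zs)"
proof -
  obtain us vs where "xs = us @ x # vs"
    using assms(1) split_list by metis
  then show ?thesis
    using assms(2) by (simp add: subseq_drop_many subseq_rev_drop_many)
qed

lemma subseq_snoc_appendI:
  assumes "subseq xs ys" and "z \<in> set zs"
  shows "subseq (xs @ [z]) (ys @ zs)"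
  using assms by (simp add: list_emb_append_mono subseq_singleton_left)

lemma order_iso_321_iff:
  "order_iso [a, b, c] [3,2,1] \<longleftrightarrow> c < b \<and> b < a"
  unfolding order_iso_def by (simp add: numeral_3_eq_3 All_less_Suc2) auto

lemma order_iso_1243_iff:
  "order_iso [a, b, c, d] [1,2,4,3] \<longleftrightarrow> a < b \<and> b < d \<and> d < c"
  unfolding order_iso_def by (simp add: eval_nat_numeral All_less_Suc2) auto

lemma order_iso_2143_iff:
  "order_iso [a, b, c, d] [2,1,4,3] \<longleftrightarrow> b < a \<and> a < d \<and> d < c"
  unfolding order_iso_def by (simp add: eval_nat_numeral All_less_Suc2) auto

lemma order_iso_length_3:
  assumes "order_iso t [x, y, z]" obtains a b c where "t = [a, b, c]"
  using assms unfolding order_iso_def by (auto simp: length_Suc_conv)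

lemma order_iso_length_4:
  assumes "order_iso t [x, y, z, w]" obtains a b c d where "t = [a, b, c, d]"
  using assms unfolding order_iso_def by (auto simp: length_Suc_conv)

lemma contains_321_iff:
  "contains s [3,2,1] \<longleftrightarrow> (\<exists>a b c. subseq [a, b, c] s \<and> c < b \<and> b < a)"
  unfolding contains_def by (metis order_iso_321_iff order_iso_length_3)

lemma contains_1243_iff:
  "contains s [1,2,4,3] \<longleftrightarrow> (\<exists>a b c d. subseq [a, b, c, d] s \<and> a < b \<and> b < d \<and> d < c)"
  unfolding contains_def by (metis order_iso_1243_iff order_iso_length_4)

lemma contains_2143_iff:
  "contains s [2,1,4,3] \<longleftrightarrow> (\<exists>a b c d. subseq [a, b, c, d] s \<and> b < a \<and> a < d \<and> d < c)"
  unfolding contains_def by (metis order_iso_2143_iff order_iso_length_4)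

lemma descent_around_min:
  fixes as bs :: "'a::linorder list"
  assumes "sorted (as @ bs)" and "\<forall>x\<in>set (as @ bs). b < x"
    and "subseq [x, y] (as @ b # bs)" and "y < x"
  shows "x \<in> set as \<and> y = b"
proof -
  from assms(1) have "sorted as" "sorted bs" and as_le_bs: "\<forall>u\<in>set as. \<forall>v\<in>set bs. u \<le> v"
    by (simp_all add: sorted_append)
  then have "\<not> subseq [x, y] as" "\<not> subseq [x, y] bs"
    using sorted_subseq_pair_le \<open>y < x\<close> leD by blast+
  moreover have "\<not> (x \<in> set as \<and> y \<in> set bs)"
    using as_le_bs \<open>y < x\<close> leD by blast
  moreover have "\<not> (x = b \<and> y \<in> set bs)"
    using assms(2,4) less_asym by auto
  ultimately show ?thesis
    using assms(3) unfolding subseq_pair_append_iff subseq_pair_Cons_iff set_simps by blast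
qed

lemma descent_in_shape:
  fixes as bs ys :: "'a::linorder list"
  assumes "sorted (as @ bs)" and "\<forall>x\<in>set (as @ bs). b < x" and "sorted ys"
    and "subseq [x, y] (as @ b # bs @ ys)" and "y < x"
  shows "x \<in> set (as @ b # bs) \<and> y \<in> set ys \<or> x \<in> set as \<and> y = b"
proof -
  have "\<not> subseq [x, y] ys"
    using assms(3,5) sorted_subseq_pair_le leD by blast
  moreover have "subseq [x, y] (as @ b # bs) \<Longrightarrow> x \<in> set as \<and> y = b"
    using descent_around_min assms(1,2,5) by blast
  moreover have "subseq [x, y] ((as @ b # bs) @ ys)"
    using assms(4) by simp
  ultimately show ?thesis
    unfolding subseq_pair_append_iff by blast
qed

lemma avoids_321_shape_iff:
  fixes as bs ys :: "nat list"
  assumes high: "\<forall>x\<in>set (as @ bs). b < x \<and> (\<forall>y\<in>set ys. y < x)"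
    and "b \<notin> set ys" and "as @ bs \<noteq> []" and "ys \<noteq> []"
  shows "\<not> contains (as @ b # bs @ ys) [3,2,1] \<longleftrightarrow>
           sorted (as @ bs) \<and> sorted ys \<and> (as = [] \<or> (\<forall>y\<in>set ys. b < y))"
    (is "\<not> contains ?\<sigma> _ \<longleftrightarrow> ?sorted_high \<and> ?sorted_low \<and> ?min_first")
proof
  assume no_321: "\<not> contains ?\<sigma> [3,2,1]"
  have \<sigma>_split: "?\<sigma> = (as @ b # bs) @ ys"
    by simp
  have high_before_low: "subseq [h, y, z] ?\<sigma>" if "h \<in> set (as @ bs)" "subseq [y, z] ys" for h y z
  proof -
    have "h \<in> set (as @ b # bs)"
      using that(1) by auto
    then show ?thesis
      unfolding \<sigma>_split using that(2) by (rule subseq_Cons_appendI)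
  qed
  obtain z where "z \<in> set ys"
    using \<open>ys \<noteq> []\<close> hd_in_set by blast
  obtain h where "h \<in> set (as @ bs)"
    using \<open>as @ bs \<noteq> []\<close> hd_in_set by blast
  have ?sorted_high
  proof (rule ccontr)
    assume "\<not> ?sorted_high"
    then obtain x y where xy: "subseq [x, y] (as @ bs)" "y < x"
      unfolding sorted_iff_subseq_pairs by (auto simp: not_le)
    have "subseq [x, y] (as @ b # bs)"
      using xy(1) by (rule subseq_order.order_trans) (simp add: subseq_append' list_emb_Cons)
    then have "subseq ([x, y] @ [z]) ((as @ b # bs) @ ys)"
      using \<open>z \<in> set ys\<close> by (rule subseq_snoc_appendI)
    moreover have "z < y"
      using high \<open>z \<in> set ys\<close> set_mono_subseq[OF xy(1)] by auto
    ultimately have "contains ?\<sigma> [3,2,1]"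
      using \<open>y < x\<close> unfolding contains_321_iff by auto
    with no_321 show False ..
  qed
  moreover have ?sorted_low
  proof (rule ccontr)
    assume "\<not> ?sorted_low"
    then obtain y z where yz: "subseq [y, z] ys" "z < y"
      unfolding sorted_iff_subseq_pairs by (auto simp: not_le)
    moreover have "y < h"
      using high \<open>h \<in> set (as @ bs)\<close> set_mono_subseq[OF yz(1)] by auto
    ultimately have "contains ?\<sigma> [3,2,1]"
      using high_before_low[OF \<open>h \<in> set (as @ bs)\<close> yz(1)] unfolding contains_321_iff by blast
    with no_321 show False ..
  qed
  moreover have ?min_first
  proof (rule ccontr)
    assume "\<not> ?min_first"
    then obtain y where "as \<noteq> []" "y \<in> set ys" "y < b"
      using \<open>b \<notin> set ys\<close> by (auto simp: not_less le_less)
    then obtain x where "x \<in> set as"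
      using hd_in_set by blast
    have "subseq [b, y] (b # bs @ ys)"
      using \<open>y \<in> set ys\<close> by (simp add: subseq_singleton_left)
    then have "subseq [x, b, y] ?\<sigma>"
      using \<open>x \<in> set as\<close> by (rule subseq_Cons_appendI[rotated])
    moreover have "b < x"
      using high \<open>x \<in> set as\<close> by simp
    ultimately have "contains ?\<sigma> [3,2,1]"
      using \<open>y < b\<close> unfolding contains_321_iff by blast
    with no_321 show False ..
  qed
  ultimately show "?sorted_high \<and> ?sorted_low \<and> ?min_first"
    by blast
next
  assume "?sorted_high \<and> ?sorted_low \<and> ?min_first"
  then have "?sorted_high" "?sorted_low" "?min_first"
    by blast+
  show "\<not> contains ?\<sigma> [3,2,1]"
  proof
    assume "contains ?\<sigma> [3,2,1]"
    then obtain x y z where xyz: "subseq [x, y, z] ?\<sigma>" "z < y" "y < x"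
      unfolding contains_321_iff by blast
    have "subseq [x, y] ?\<sigma>" "subseq [y, z] ?\<sigma>"
      by (rule subseq_order.order_trans[OF _ xyz(1)], simp)+
    moreover have "\<forall>x\<in>set (as @ bs). b < x"
      using high by blast
    ultimately have xy: "x \<in> set (as @ b # bs) \<and> y \<in> set ys \<or> x \<in> set as \<and> y = b"
      and yz: "y \<in> set (as @ b # bs) \<and> z \<in> set ys \<or> y \<in> set as \<and> z = b"
      using descent_in_shape[OF \<open>?sorted_high\<close> _ \<open>?sorted_low\<close>] xyz(2,3) by blast+
    have disjoint: "set (as @ b # bs) \<inter> set ys = {}"
      using high \<open>b \<notin> set ys\<close> by auto
    have "y = b" "as \<noteq> []"
      using xy yz disjoint by auto
    then show False
      using yz \<open>?min_first\<close> xyz(2) by auto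
  qed
qed

lemma avoids_1243_2143_shape:
  fixes as bs ys :: "nat list"
  assumes "sorted (as @ bs)" and "sorted ys"
    and high: "\<forall>x\<in>set (as @ bs). b < x \<and> (\<forall>y\<in>set ys. y < x)"
    and "b \<notin> set ys"
  shows "\<not> contains (as @ b # bs @ ys) [1,2,4,3]" and "\<not> contains (as @ b # bs @ ys) [2,1,4,3]"
proof -
  let ?\<sigma> = "as @ b # bs @ ys"
  let ?L = "as @ b # bs"
  have b_less: "\<forall>x\<in>set (as @ bs). b < x"
    using high by blast
  have high_low: "y < x" if "x \<in> set (as @ bs)" "y \<in> set ys" for x y
    using high that by blast
  have disjoint: "set ?L \<inter> set ys = {}"
    using high \<open>b \<notin> set ys\<close> by auto
  have below_low: "x = b" if "x \<in> set ?L" "y \<in> set ys" "x < y" for x y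
    using that high_low[of x y] by auto
  have b_min: "b \<le> x" if "x \<in> set ?L" for x
    using that b_less by (auto intro: less_imp_le)
  have before_L: "u \<in> set ?L" if "subseq [u, v] ?\<sigma>" "v \<in> set ?L" for u v
  proof -
    have "subseq [u, v] (?L @ ys)"
      using that(1) by simp
    then show ?thesis
      using that(2) disjoint set_mono_subseq[of "[u, v]"] unfolding subseq_pair_append_iff by auto
  qed
  have no_x43: False
    if sub: "subseq [a, a', c, d] ?\<sigma>" and "a \<noteq> a'" "a < d" "a' < d" "d < c" for a a' c d
  proof -
    have "subseq [c, d] ?\<sigma>" "subseq [a, c] ?\<sigma>" "subseq [a', c] ?\<sigma>"
      by (rule subseq_order.order_trans[OF _ sub], simp)+
    have cd: "c \<in> set ?L \<and> d \<in> set ys \<or> c \<in> set as \<and> d = b"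
      using descent_in_shape[OF assms(1) b_less assms(2) \<open>subseq [c, d] ?\<sigma>\<close> \<open>d < c\<close>] .
    then have "a \<in> set ?L" "a' \<in> set ?L"
      using before_L \<open>subseq [a, c] ?\<sigma>\<close> \<open>subseq [a', c] ?\<sigma>\<close> by auto
    with cd show False
      using that below_low b_min leD by blast
  qed
  show "\<not> contains ?\<sigma> [1,2,4,3]" "\<not> contains ?\<sigma> [2,1,4,3]"
    unfolding contains_1243_iff contains_2143_iff by (auto elim!: no_x43)
qed

lemma avoids_shape_iff:
  fixes as bs ys :: "nat list"
  assumes "\<forall>x\<in>set (as @ bs). b < x \<and> (\<forall>y\<in>set ys. y < x)"
    and "b \<notin> set ys" and "as @ bs \<noteq> []" and "ys \<noteq> []"
  shows "(\<forall>q\<in>{[1,2,4,3], [2,1,4,3], [3,2,1]}. \<not> contains (as @ b # bs @ ys) q) \<longleftrightarrow>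
           sorted (as @ bs) \<and> sorted ys \<and> (as = [] \<or> (\<forall>y\<in>set ys. b < y))"
  using avoids_321_shape_iff[OF assms] avoids_1243_2143_shape[OF _ _ assms(1,2)] by auto

lemma is_perm_iff_set: "is_perm m p \<longleftrightarrow> length p = m \<and> set p = {1..m}"
proof
  assume "length p = m \<and> set p = {1..m}"
  then show "is_perm m p"
    unfolding is_perm_def by (simp add: card_distinct)
qed (simp add: is_perm_def)

lemma is_perm_split_at_1_set:
  assumes "is_perm i (as @ 1 # bs)"
  shows "set (as @ bs) = {2..i}"
proof -
  have "set (as @ bs) = set (as @ 1 # bs) - {1}"
    using assms unfolding is_perm_def by auto
  also have "\<dots> = {1..i} - {1}"
    using assms unfolding is_perm_def by simp
  also have "\<dots> = {2..i}"
    by auto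
  finally show ?thesis .
qed

lemma is_perm_split_at_1:
  assumes "is_perm i p" and "1 \<le> i"
  obtains as bs where "p = as @ 1 # bs" and "set (as @ bs) = {2..i}"
proof -
  have "1 \<in> set p"
    using assms unfolding is_perm_def by simp
  then obtain as bs where "p = as @ 1 # bs"
    by (meson split_list)
  then show ?thesis
    using that assms(1) is_perm_split_at_1_set by blast
qed

lemma is_perm_Cons_eq_1_iff:
  assumes "is_perm m (b # ys)"
  shows "b = 1 \<longleftrightarrow> (\<forall>y\<in>set ys. b < y)"
proof -
  have set: "set (b # ys) = {1..m}" and "b \<notin> set ys"
    using assms unfolding is_perm_def by simp_all
  then have "set ys \<subseteq> {1..m} - {b}" "b \<in> {1..m}"
    using set_subset_Cons[of ys b] by auto
  moreover have "1 \<in> set (b # ys)"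
    using set \<open>b \<in> {1..m}\<close> by simp
  ultimately show ?thesis
    by fastforce
qed

lemma star_split:
  assumes "1 \<notin> set as" and "1 \<notin> set bs"
  shows "star (as @ 1 # bs) (b # ys) =
           map (\<lambda>x. x + length ys) as @ b # map (\<lambda>x. x + length ys) bs
             @ (length as + length bs + length ys + 2) # ys"
proof -
  have shift: "(if x + length (b # ys) - 1 = length (b # ys) then b else x + length (b # ys) - 1)
      = (if x = 1 then b else x + length ys)" for x
    by simp
  have "map (\<lambda>x. if x = 1 then b else x + length ys) xs = map (\<lambda>x. x + length ys) xs"
    if "1 \<notin> set xs" for xs
    using that by (induction xs) auto
  then show ?thesis
    using assms unfolding star_def Let_def shift by simp
qed

lemma is_perm_star:
  assumes "is_perm i p1" and "is_perm m p2" and "1 \<le> i" and "1 \<le> m"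
  shows "is_perm (i + m) (star p1 p2)"
proof -
  obtain as bs where p1: "p1 = as @ 1 # bs" and as_bs: "set (as @ bs) = {2..i}"
    using assms(1,3) by (rule is_perm_split_at_1)
  obtain b ys where p2: "p2 = b # ys"
    using assms(2,4) unfolding is_perm_def by (cases p2) auto
  define k where "k = length ys"
  have len: "length as + length bs + 1 = i" "m = k + 1"
    using assms(1,2) unfolding is_perm_def p1 p2 k_def by auto
  have "1 \<notin> set (as @ bs)"
    unfolding as_bs by simp
  then have \<sigma>: "star p1 p2 = map (\<lambda>x. x + k) as @ b # map (\<lambda>x. x + k) bs @ (i + m) # ys"
    using len unfolding p1 p2 k_def by (subst star_split) auto
  have "set (star p1 p2) = (\<lambda>x. x + k) ` {2..i} \<union> set (b # ys) \<union> {i + m}"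
    unfolding \<sigma> as_bs[symmetric] by auto
  also have "\<dots> = {k + 2..i + k} \<union> {1..k + 1} \<union> {i + k + 1}"
    using assms(2) len unfolding is_perm_def p2 by simp
  also have "\<dots> = {1..i + m}"
    using len by auto
  finally show ?thesis
    unfolding is_perm_iff_set using len by (simp add: \<sigma> k_def)
qed

lemma star_avoids_iff:
  assumes p1: "is_perm i (as @ 1 # bs)" and p2: "is_perm m (b # ys)" and "1 \<le> i" and "2 \<le> m"
  shows "star (as @ 1 # bs) (b # ys) \<in> Av (i + m) {[1,2,4,3], [2,1,4,3], [3,2,1]} \<longleftrightarrow>
           sorted (as @ bs) \<and> sorted ys \<and> (as = [] \<or> (\<forall>y\<in>set ys. b < y))"
proof -
  define k where "k = length ys"
  have as_bs: "set (as @ bs) = {2..i}"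
    using p1 by (rule is_perm_split_at_1_set)
  have len: "length as + length bs + 1 = i"
    using p1 unfolding is_perm_def by simp
  have low: "set (b # ys) = {1..k + 1}" "b \<notin> set ys" and m: "m = k + 1" and "ys \<noteq> []"
    using p2 \<open>2 \<le> m\<close> unfolding is_perm_def k_def by auto
  let ?hi = "map (\<lambda>x. x + k) as @ map (\<lambda>x. x + k) bs @ [i + m]"
  have "1 \<notin> set (as @ bs)"
    unfolding as_bs by simp
  then have \<sigma>: "star (as @ 1 # bs) (b # ys) =
      map (\<lambda>x. x + k) as @ b # (map (\<lambda>x. x + k) bs @ [i + m]) @ ys"
    using len m unfolding k_def by (subst star_split) auto
  have "set ?hi = (\<lambda>x. x + k) ` set (as @ bs) \<union> {i + m}"
    by auto
  then have "set ?hi = {k + 2..i + k} \<union> {i + m}"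
    unfolding as_bs by simp
  then have "\<forall>x\<in>set ?hi. k + 1 < x"
    using m \<open>1 \<le> i\<close> by auto
  moreover have "\<forall>y\<in>set (b # ys). y \<le> k + 1"
    unfolding low(1) by simp
  ultimately have high: "\<forall>x\<in>set ?hi. b < x \<and> (\<forall>y\<in>set ys. y < x)"
    by fastforce
  have "\<forall>x\<in>set (as @ bs). x + k < i + m"
    unfolding as_bs m by auto
  then have "sorted ?hi \<longleftrightarrow> sorted (as @ bs)"
    by (auto simp: sorted_append sorted_map less_imp_le)
  moreover have "is_perm (i + m) (star (as @ 1 # bs) (b # ys))"
    using is_perm_star[OF p1 p2] \<open>1 \<le> i\<close> \<open>2 \<le> m\<close> by simp
  ultimately show ?thesis
    using avoids_shape_iff[OF high low(2) _ \<open>ys \<noteq> []\<close>] unfolding Av_def \<sigma> by simp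
qed

theorem mainTheorem13:
  fixes i n :: nat and p1 p2 :: "nat list"
  assumes "1 \<le> i" and "i \<le> n - 2"
    and "p1 \<in> Av i {[1,2,4,3], [2,1,4,3], [3,2,1]}"
    and "p2 \<in> Av (n - i) {[1,2,4,3], [2,1,4,3], [3,2,1]}"
  shows "star p1 p2 \<in> Av n {[1,2,4,3], [2,1,4,3], [3,2,1]} \<longleftrightarrow>
           ((hd p1 = 1 \<or> hd p2 = 1)
            \<and> sorted (filter (\<lambda>x. 2 \<le> x) p1)
            \<and> sorted (tl p2))"
proof -
  define m where "m = n - i"
  have n: "n = i + m" and "2 \<le> m"
    using assms(1,2) unfolding m_def by auto
  have p1: "is_perm i p1" and p2: "is_perm m p2"
    using assms(3,4) unfolding Av_def m_def by auto
  obtain as bs where p1_eq: "p1 = as @ 1 # bs" and as_bs: "set (as @ bs) = {2..i}"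
    using p1 assms(1) by (rule is_perm_split_at_1)
  obtain b ys where p2_eq: "p2 = b # ys"
    using p2 \<open>2 \<le> m\<close> unfolding is_perm_def by (cases p2) auto
  have ge_2: "\<forall>x\<in>set (as @ bs). 2 \<le> x"
    unfolding as_bs by simp
  have "star p1 p2 \<in> Av n {[1,2,4,3], [2,1,4,3], [3,2,1]} \<longleftrightarrow>
          sorted (as @ bs) \<and> sorted ys \<and> (as = [] \<or> (\<forall>y\<in>set ys. b < y))"
    using star_avoids_iff p1 p2 assms(1) \<open>2 \<le> m\<close> unfolding n p1_eq p2_eq by blast
  also have "as @ bs = filter (\<lambda>x. 2 \<le> x) p1"
    using ge_2 unfolding p1_eq by simp
  also have "as = [] \<longleftrightarrow> hd p1 = 1"
    using ge_2 unfolding p1_eq by (cases as) auto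
  also have "(\<forall>y\<in>set ys. b < y) \<longleftrightarrow> hd p2 = 1"
    using is_perm_Cons_eq_1_iff p2 unfolding p2_eq by auto
  finally show ?thesis
    unfolding p2_eq by auto
qed

end
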